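(* Let $\omega_N=(\alpha^{+,(N)},\alpha^{-,(N)},\gamma_1^{(N)},\delta^{(N)})\in\hat\Omega$ and $\omega=(\alpha^+,\alpha^-,\gamma_1,\delta)\in\hat\Omega$, and suppose $\omega_N\to\omega$ coordinate-wise as $N\to\infty$. Then $$\sum_{i\ge1}\left|\alpha_i^{+,(N)}-\alpha_i^+\right|^3\xrightarrow[N\to\infty]{}0,\qquad \sum_{i\ge1}\left|\alpha_i^{-,(N)}-\alpha_i^-\right|^3\xrightarrow[N\to\infty]{}0.$$
   Context: $\hat\Omega$ is the set of $(\alpha^+,\alpha^-,\gamma_1,\delta)$ with $\alpha^\pm=(\alpha_1^\pm\ge\alpha_2^\pm\ge\dots\ge0)$ non-increasing sequences of non-negative reals, $\gamma_1\in\mathbb{R}$, $\delta\ge0$, and $\sum_i(\alpha_i^+)^2+\sum_i(\alpha_i^-)^2\le\delta$. Coordinate-wise convergence means convergence of each $\alpha_i^\pm$, of $\gamma_1$ and of $\delta$. *)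

theory Defs
  imports "HOL-Analysis.Analysis"
begin

text \<open>Elements of Omega-hat. Sequences alpha_1, alpha_2, ... are represented as
  functions nat => real with index i+1 stored at position i.\<close>

definition Omega_hat :: "(nat \<Rightarrow> real) \<Rightarrow> (nat \<Rightarrow> real) \<Rightarrow> real \<Rightarrow> real \<Rightarrow> bool" where
  "Omega_hat ap am g d \<longleftrightarrow>
     (\<forall>i. ap i \<ge> 0) \<and> decseq ap \<and> (\<forall>i. am i \<ge> 0) \<and> decseq am \<and> d \<ge> 0 \<and>
     summable (\<lambda>i. (ap i)\<^sup>2) \<and> summable (\<lambda>i. (am i)\<^sup>2) \<and>
     (\<Sum>i. (ap i)\<^sup>2) + (\<Sum>i. (am i)\<^sup>2) \<le> d"

end

theory Submission
  imports Defs
begin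

(* A non-negative non-increasing sequence a with sum of squares at most B satisfies
   (M+1) a_M^2 <= B, so a_M is small for large M uniformly over all such sequences;
   and a_i^3 <= a_M a_i^2 for i >= M bounds the tail of the sum of cubes by a_M B.
   Since |x - y|^3 <= x^3 + y^3 for x, y >= 0, the tails of the sums of
   |alpha_i^(N) - alpha_i|^3 are uniformly small, while each finite head tends to 0
   coordinate-wise. A common B exists because the convergent sequence delta^(N)
   is bounded. *)

definition sq_bounded_decseq :: "real \<Rightarrow> (nat \<Rightarrow> real) \<Rightarrow> bool" where
  "sq_bounded_decseq B a \<longleftrightarrow>
     (\<forall>i. a i \<ge> 0) \<and> decseq a \<and> summable (\<lambda>i. (a i)\<^sup>2) \<and> (\<Sum>i. (a i)\<^sup>2) \<le> B"

lemma sq_bounded_decseq_mono: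
  "sq_bounded_decseq B a \<Longrightarrow> B \<le> B' \<Longrightarrow> sq_bounded_decseq B' a"
  unfolding sq_bounded_decseq_def by auto

lemma sq_bounded_decseq_nonneg_bound:
  "sq_bounded_decseq B a \<Longrightarrow> B \<ge> 0"
  unfolding sq_bounded_decseq_def by (meson order_trans suminf_nonneg zero_le_power2)

lemma Omega_hat_imp_sq_bounded_decseq:
  assumes "Omega_hat ap am g d"
  shows "sq_bounded_decseq d ap" "sq_bounded_decseq d am"
proof -
  have "(\<Sum>i. (ap i)\<^sup>2) \<ge> 0" "(\<Sum>i. (am i)\<^sup>2) \<ge> 0"
    using assms unfolding Omega_hat_def by (auto intro: suminf_nonneg)
  then show "sq_bounded_decseq d ap" "sq_bounded_decseq d am"
    using assms unfolding Omega_hat_def sq_bounded_decseq_def by auto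
qed

lemma abs_diff_cube_le:
  fixes x y :: real
  assumes "x \<ge> 0" "y \<ge> 0"
  shows "\<bar>x - y\<bar> ^ 3 \<le> x ^ 3 + y ^ 3"
proof -
  have "\<bar>x - y\<bar> ^ 3 \<le> (max x y) ^ 3"
    using assms by (intro power_mono) auto
  also have "\<dots> \<le> x ^ 3 + y ^ 3"
    using assms by (auto simp: max_def)
  finally show ?thesis .
qed

lemma suminf_le_initial_segment_plus:
  fixes f g :: "nat \<Rightarrow> real"
  assumes "summable f" "summable g" "\<And>i. g i \<ge> 0" "\<And>i. i \<ge> M \<Longrightarrow> f i \<le> g i"
  shows "(\<Sum>i. f i) \<le> (\<Sum>i<M. f i) + (\<Sum>i. g i)"
proof -
  have "(\<Sum>i. f i) = (\<Sum>i. f (i + M)) + (\<Sum>i<M. f i)"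
    using assms(1) by (rule suminf_split_initial_segment)
  also have "(\<Sum>i. f (i + M)) \<le> (\<Sum>i. g (i + M))"
    using assms by (intro suminf_le) (auto simp: summable_iff_shift)
  also have "(\<Sum>i. g (i + M)) = (\<Sum>i. g i) - (\<Sum>i<M. g i)"
    using assms(2) by (rule suminf_minus_initial_segment)
  also have "\<dots> \<le> (\<Sum>i. g i)"
    using assms(3) by (simp add: sum_nonneg)
  finally show ?thesis by simp
qed

lemma sq_bounded_decseq_weighted_sq:
  assumes "sq_bounded_decseq B a"
  shows "real (Suc M) * (a M)\<^sup>2 \<le> B"
proof -
  have "real (Suc M) * (a M)\<^sup>2 = (\<Sum>i<Suc M. (a M)\<^sup>2)"
    by simp
  also have "\<dots> \<le> (\<Sum>i<Suc M. (a i)\<^sup>2)"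
    using assms by (intro sum_mono power_mono) (auto simp: sq_bounded_decseq_def decseq_def)
  also have "\<dots> \<le> (\<Sum>i. (a i)\<^sup>2)"
    using assms by (intro sum_le_suminf) (auto simp: sq_bounded_decseq_def)
  finally show ?thesis
    using assms by (simp add: sq_bounded_decseq_def)
qed

lemma sq_bounded_decseq_uniformly_small:
  assumes "c > 0"
  obtains M where "\<And>a. sq_bounded_decseq B a \<Longrightarrow> a M < c"
proof -
  obtain M :: nat where M: "real M > B / c\<^sup>2"
    using reals_Archimedean2 by blast
  have "a M < c" if a: "sq_bounded_decseq B a" for a
  proof -
    have "real (Suc M) * (a M)\<^sup>2 \<le> B"
      using a by (rule sq_bounded_decseq_weighted_sq)
    also have "B < real (Suc M) * c\<^sup>2"
    proof -
      have "B < real M * c\<^sup>2"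
        using M assms by (simp add: field_simps)
      moreover have "real (Suc M) * c\<^sup>2 = c\<^sup>2 + real M * c\<^sup>2"
        by (simp add: algebra_simps)
      ultimately show ?thesis
        using zero_le_power2[of c] by linarith
    qed
    finally have "(a M)\<^sup>2 < c\<^sup>2"
      by simp
    then show ?thesis
      using assms power2_less_imp_less by fastforce
  qed
  then show ?thesis
    using that by blast
qed

lemma sq_bounded_decseq_cube_le:
  assumes "sq_bounded_decseq B a" "M \<le> i"
  shows "(a i) ^ 3 \<le> a M * (a i)\<^sup>2"
proof -
  have "a i \<le> a M"
    using assms by (auto simp: sq_bounded_decseq_def decseq_def)
  then have "a i * (a i)\<^sup>2 \<le> a M * (a i)\<^sup>2"
    by (intro mult_right_mono) auto
  then show ?thesis
    by (simp add: power3_eq_cube power2_eq_square)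
qed

lemma sq_bounded_decseq_cube_dist:
  assumes a: "sq_bounded_decseq B a" and b: "sq_bounded_decseq B b"
  shows "summable (\<lambda>i. \<bar>a i - b i\<bar> ^ 3)"
    and "(\<Sum>i. \<bar>a i - b i\<bar> ^ 3) \<le> (\<Sum>i<M. \<bar>a i - b i\<bar> ^ 3) + (a M + b M) * B"
proof -
  define g where "g M i = a M * (a i)\<^sup>2 + b M * (b i)\<^sup>2" for M i
  have nonneg: "\<forall>i. a i \<ge> 0" "\<forall>i. b i \<ge> 0"
    using a b by (auto simp: sq_bounded_decseq_def)
  have g_nonneg: "g M i \<ge> 0" for M i
    using nonneg unfolding g_def by (simp add: add_nonneg_nonneg)
  have g_sums: "g M sums (a M * (\<Sum>i. (a i)\<^sup>2) + b M * (\<Sum>i. (b i)\<^sup>2))" for M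
    unfolding g_def using a b
    by (intro sums_add sums_mult summable_sums) (auto simp: sq_bounded_decseq_def)
  have cube_le_g: "\<bar>a i - b i\<bar> ^ 3 \<le> g M i" if "M \<le> i" for M i
  proof -
    have "\<bar>a i - b i\<bar> ^ 3 \<le> (a i) ^ 3 + (b i) ^ 3"
      using nonneg by (intro abs_diff_cube_le) auto
    also have "\<dots> \<le> g M i"
      unfolding g_def using sq_bounded_decseq_cube_le[OF a that] sq_bounded_decseq_cube_le[OF b that]
      by (rule add_mono)
    finally show ?thesis .
  qed
  show summable: "summable (\<lambda>i. \<bar>a i - b i\<bar> ^ 3)"
  proof (rule summable_comparison_test'[of "g 0" 0])
    show "summable (g 0)"
      using g_sums by (rule sums_summable)
    show "norm (\<bar>a i - b i\<bar> ^ 3) \<le> g 0 i" for i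
      using cube_le_g[of 0 i] by simp
  qed
  have "(\<Sum>i. \<bar>a i - b i\<bar> ^ 3) \<le> (\<Sum>i<M. \<bar>a i - b i\<bar> ^ 3) + (\<Sum>i. g M i)"
    using summable sums_summable[OF g_sums] g_nonneg cube_le_g
    by (rule suminf_le_initial_segment_plus)
  also have "(\<Sum>i. g M i) \<le> a M * B + b M * B"
  proof -
    have "(\<Sum>i. g M i) = a M * (\<Sum>i. (a i)\<^sup>2) + b M * (\<Sum>i. (b i)\<^sup>2)"
      using g_sums by (rule sums_unique[symmetric])
    also have "\<dots> \<le> a M * B + b M * B"
      using a b nonneg by (intro add_mono mult_left_mono) (auto simp: sq_bounded_decseq_def)
    finally show ?thesis .
  qed
  finally show "(\<Sum>i. \<bar>a i - b i\<bar> ^ 3) \<le> (\<Sum>i<M. \<bar>a i - b i\<bar> ^ 3) + (a M + b M) * B"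
    by (simp add: distrib_right)
qed

lemma sq_bounded_decseq_cube_dist_tendsto_zero:
  assumes a: "\<And>N. sq_bounded_decseq B (a N)" and b: "sq_bounded_decseq B b"
    and lim: "\<And>i. (\<lambda>N. a N i) \<longlonglongrightarrow> b i"
  shows "(\<lambda>N. \<Sum>i. \<bar>a N i - b i\<bar> ^ 3) \<longlonglongrightarrow> 0"
proof (rule tendstoI)
  fix e :: real
  assume e: "e > 0"
  have B: "B \<ge> 0"
    using b by (rule sq_bounded_decseq_nonneg_bound)
  define c where "c = e / (4 * (B + 1))" \<comment> \<open>\<open>B + 1\<close> rather than \<open>B\<close>: \<open>B = 0\<close> is possible\<close>
  have c: "c > 0"
    using e B by (simp add: c_def)
  obtain M where small: "\<And>a. sq_bounded_decseq B a \<Longrightarrow> a M < c"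
    using sq_bounded_decseq_uniformly_small[OF c] by blast
  have tail: "(a N M + b M) * B \<le> e / 2" for N
  proof -
    have "(a N M + b M) * B \<le> (2 * c) * B"
      using small[OF a, of N] small[OF b] B by (intro mult_right_mono) auto
    also have "\<dots> \<le> e / 2"
      using B e by (simp add: c_def field_simps)
    finally show ?thesis .
  qed
  have "(\<lambda>N. \<Sum>i<M. \<bar>a N i - b i\<bar> ^ 3) \<longlonglongrightarrow> (\<Sum>i<M. \<bar>b i - b i\<bar> ^ 3)"
    by (intro tendsto_intros lim)
  then have "(\<lambda>N. \<Sum>i<M. \<bar>a N i - b i\<bar> ^ 3) \<longlonglongrightarrow> 0"
    by simp
  then have "\<forall>\<^sub>F N in sequentially. (\<Sum>i<M. \<bar>a N i - b i\<bar> ^ 3) < e / 2"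
    using e by (intro order_tendstoD(2)[of _ 0]) auto
  then show "\<forall>\<^sub>F N in sequentially. dist (\<Sum>i. \<bar>a N i - b i\<bar> ^ 3) 0 < e"
  proof eventually_elim
    case (elim N)
    have "0 \<le> (\<Sum>i. \<bar>a N i - b i\<bar> ^ 3)"
      using sq_bounded_decseq_cube_dist(1)[OF a b] by (intro suminf_nonneg) auto
    then show ?case
      using sq_bounded_decseq_cube_dist(2)[OF a b, of N M] tail[of N] elim by simp
  qed
qed

theorem lemma5p3:
  fixes apN amN :: "nat \<Rightarrow> nat \<Rightarrow> real" and gN dN :: "nat \<Rightarrow> real"
    and ap am :: "nat \<Rightarrow> real" and g d :: real
  assumes "\<And>N. Omega_hat (apN N) (amN N) (gN N) (dN N)"
    and "Omega_hat ap am g d"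
    and "\<And>i. (\<lambda>N. apN N i) \<longlonglongrightarrow> ap i"
    and "\<And>i. (\<lambda>N. amN N i) \<longlonglongrightarrow> am i"
    and "gN \<longlonglongrightarrow> g"
    and "dN \<longlonglongrightarrow> d"
  shows "(\<forall>N. summable (\<lambda>i. \<bar>apN N i - ap i\<bar> ^ 3)) \<and>
         (\<forall>N. summable (\<lambda>i. \<bar>amN N i - am i\<bar> ^ 3)) \<and>
         (\<lambda>N. \<Sum>i. \<bar>apN N i - ap i\<bar> ^ 3) \<longlonglongrightarrow> 0 \<and>
         (\<lambda>N. \<Sum>i. \<bar>amN N i - am i\<bar> ^ 3) \<longlonglongrightarrow> 0"
proof -
  obtain K where K: "\<And>N. \<bar>dN N\<bar> \<le> K"
    using convergent_imp_Bseq[OF convergentI[OF assms(6)]] by (auto simp: Bseq_def)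
  define B where "B = max K d"
  have B: "dN N \<le> B" "d \<le> B" for N
    using K[of N] by (auto simp: B_def)
  note seqN = Omega_hat_imp_sq_bounded_decseq[OF assms(1), THEN sq_bounded_decseq_mono, OF B(1)]
  note seq = Omega_hat_imp_sq_bounded_decseq[OF assms(2), THEN sq_bounded_decseq_mono, OF B(2)]
  show ?thesis
    using sq_bounded_decseq_cube_dist(1)[OF seqN(1) seq(1)] sq_bounded_decseq_cube_dist(1)[OF seqN(2) seq(2)]
      sq_bounded_decseq_cube_dist_tendsto_zero[OF seqN(1) seq(1) assms(3)]
      sq_bounded_decseq_cube_dist_tendsto_zero[OF seqN(2) seq(2) assms(4)]
    by blast
qed

end
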